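(* Let $s_\theta$ be the Sturmian word of irrational slope $\theta\in(0,1)$, let $1\le k\le m$, let $P_k=(p_1,\dots,p_k)$ be an ordered partition of $m$, and let $s_0=0$, $s_\ell=p_1+\dots+p_\ell$ ($1\le\ell\le k$). Let $0=q'_0<q'_1<\dots<q'_k$ be the $k+1$ points $\{-s_0\theta\},\{-s_1\theta\},\dots,\{-s_k\theta\}$ arranged in increasing order, and set $q'_{k+1}=1$. Let $\lambda_0,\dots,\lambda_k$ be the $k+1$ varieties of $\mathcal{L}_{(m,k)}$ listed in the order inherited from the lexicographic order of the underlying factors. Then for each $0\le j\le k$, a factor $u\in\mathcal{L}_m$ belongs (as a partitioned factor) to $\lambda_j$ if and only if $J_u\subseteq[q'_j,q'_{j+1})$; equivalently, the occurrence of a length-$m$ factor at position $n$ is of variety $\lambda_j$ iff $\{n\theta\}\in[q'_j,q'_{j+1})$. Consequently $Fr(\lambda_j)=q'_{j+1}-q'_j$.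
   Context: For irrational $\theta\in(0,1)$, $s_\theta=s_0s_1\cdots$ is the infinite word over $\{a<b\}$ with $s_n=a$ if $\{n\theta\}\in I_a=[0,1-\theta)$ and $s_n=b$ if $\{n\theta\}\in I_b=[1-\theta,1)$, $\{x\}$ the fractional part. $\mathcal{L}_m$ is the set of factors of length $m$. $\mathcal{L}_{(m,k)}$ is the set of factorizations $u=u_1\cdots u_k$, $|u_i|=p_i$, $u\in\mathcal{L}_m$; the height profile is $\langle|u_1|_b,\dots,|u_k|_b\rangle$, and varieties are classes of equal height profile; each variety consists of lexicographically consecutive factors, which gives the inherited order. $R(x)=\{x+\theta\}$ on the circle $[0,1)$; for a factor $u=r_0\cdots r_{m-1}$, $J_u=\bigcap_{i=0}^{m-1}R^{-i}(I_{r_i})$ ($I_r=I_a$ or $I_b$ as $r=a$ or $b$), and $u$ occurs at position $n$ iff $\{n\theta\}\in J_u$. The frequency of a variety is $Fr(\lambda)=\lim_{N\to\infty}\mu_N/N$, where $\mu_N$ is the number of occurrences in the length-$N$ prefix of $s_\theta$ of length-$m$ factors whose $P_k$-partitioned form belongs to $\lambda$. *)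

theory Defs
  imports Complex_Main
begin

text \<open>Letters: False = a, True = b (so a < b as booleans).\<close>

definition I_b :: "real \<Rightarrow> real set" where
  "I_b \<theta> = {1 - \<theta>..<1}"

definition I_a :: "real \<Rightarrow> real set" where
  "I_a \<theta> = {0..<1 - \<theta>}"

definition I_letter :: "real \<Rightarrow> bool \<Rightarrow> real set" where
  "I_letter \<theta> r = (if r then I_b \<theta> else I_a \<theta>)"

definition sturm :: "real \<Rightarrow> nat \<Rightarrow> bool" where
  "sturm \<theta> n = (frac (real n * \<theta>) \<in> I_b \<theta>)"

definition factor_at :: "real \<Rightarrow> nat \<Rightarrow> nat \<Rightarrow> bool list" where
  "factor_at \<theta> m n = map (sturm \<theta>) [n..<n + m]"

definition Lang :: "real \<Rightarrow> nat \<Rightarrow> bool list set" where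
  "Lang \<theta> m = {factor_at \<theta> m n | n. True}"

definition height :: "bool list \<Rightarrow> nat" where
  "height u = length (filter id u)"

definition psum :: "nat list \<Rightarrow> nat \<Rightarrow> nat" where
  "psum P l = sum_list (take l P)"

definition block :: "nat list \<Rightarrow> bool list \<Rightarrow> nat \<Rightarrow> bool list" where
  "block P u l = take (P ! l) (drop (psum P l) u)"

definition height_profile :: "nat list \<Rightarrow> bool list \<Rightarrow> nat list" where
  "height_profile P u = map (\<lambda>l. height (block P u l)) [0..<length P]"

definition varieties :: "real \<Rightarrow> nat \<Rightarrow> nat list \<Rightarrow> bool list set set" where
  "varieties \<theta> m P =
     {{u \<in> Lang \<theta> m. height_profile P u = h} | h. h \<in> height_profile P ` Lang \<theta> m}"

definition lex_less :: "bool list \<Rightarrow> bool list \<Rightarrow> bool" where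
  "lex_less u w = ((u, w) \<in> lexord {(x, y). x < y})"

definition Rot :: "real \<Rightarrow> nat \<Rightarrow> real \<Rightarrow> real" where
  "Rot \<theta> i x = frac (x + real i * \<theta>)"

definition J :: "real \<Rightarrow> bool list \<Rightarrow> real set" where
  "J \<theta> u = {x \<in> {0..<1}. \<forall>i < length u. Rot \<theta> i x \<in> I_letter \<theta> (u ! i)}"

definition qpts :: "real \<Rightarrow> nat list \<Rightarrow> nat \<Rightarrow> real" where
  "qpts \<theta> P j =
     (let Q = sorted_list_of_set {frac (- real (psum P l) * \<theta>) | l. l \<le> length P}
      in if j < length Q then Q ! j else 1)"

definition occ_count :: "real \<Rightarrow> nat \<Rightarrow> bool list set \<Rightarrow> nat \<Rightarrow> nat" where
  "occ_count \<theta> m V N = card {n. n + m \<le> N \<and> factor_at \<theta> m n \<in> V}"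

end

theory Submission
  imports Defs
begin

text \<open>
  The factor of length \<open>m\<close> at position \<open>n\<close> is the itinerary of \<open>x = {n\<theta>}\<close> under the
  rotation by \<open>\<theta>\<close>, and the number of \<open>b\<close>'s in its block of positions \<open>[s_l, s_(l+1))\<close> is
  \<open>\<lfloor>x + s_(l+1) \<theta>\<rfloor> - \<lfloor>x + s_l \<theta>\<rfloor>\<close>. On \<open>[0,1)\<close> the map \<open>x \<mapsto> \<lfloor>x + s\<theta>\<rfloor>\<close> jumps exactly at \<open>{-s\<theta>}\<close>,
  so two points give the same height profile iff no cut point \<open>{-s_l \<theta>}\<close> separates them:
  the varieties are the sets of factors coded by the cells \<open>[q'_j, q'_(j+1))\<close>, which are
  \<open>k + 1\<close> distinct nonempty intervals because \<open>\<theta>\<close> is irrational. Itineraries are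
  lexicographically monotone in \<open>x\<close>, so the lexicographic enumeration of the varieties
  runs through the cells from left to right. The frequencies need no equidistribution
  theorem: each \<open>[0, {-t\<theta>})\<close> is a bounded remainder set, since along the orbit its
  indicator is a constant plus the coboundary \<open>{(n+t)\<theta>} - {n\<theta>}\<close>.
\<close>

lemma floor_add_theta:
  assumes "0 < \<theta>" "\<theta> < 1"
  shows "\<lfloor>y + \<theta>\<rfloor> = \<lfloor>y\<rfloor> + of_bool (frac y \<in> I_b \<theta>)"
proof -
  have "y + \<theta> = (frac y + \<theta>) + of_int \<lfloor>y\<rfloor>" by (simp add: frac_def)
  then have "\<lfloor>y + \<theta>\<rfloor> = \<lfloor>frac y + \<theta>\<rfloor> + \<lfloor>y\<rfloor>" by (metis floor_add_int)
  moreover have "\<lfloor>frac y + \<theta>\<rfloor> = of_bool (frac y \<in> I_b \<theta>)"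
    using assms frac_lt_1[of y] frac_ge_0[of y] by (auto simp: I_b_def floor_eq_iff)
  ultimately show ?thesis by simp
qed

lemma floor_add_unit_interval:
  fixes x s :: real
  assumes "0 \<le> x" "x < 1"
  shows "\<lfloor>x + s\<rfloor> = \<lceil>s\<rceil> - of_bool (x < frac (- s))"
proof -
  have "frac (- s) = \<lceil>s\<rceil> - s" by (simp add: frac_def ceiling_def)
  then have "x + s = (x - frac (- s)) + of_int \<lceil>s\<rceil>" by simp
  then have "\<lfloor>x + s\<rfloor> = \<lfloor>x - frac (- s)\<rfloor> + \<lceil>s\<rceil>" by (metis floor_add_int)
  moreover have "\<lfloor>x - frac (- s)\<rfloor> = - of_bool (x < frac (- s))"
  proof -
    have "0 \<le> frac (- s)" "frac (- s) < 1" by (simp_all add: frac_lt_1)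
    with assms have "- 1 \<le> x - frac (- s)" "x - frac (- s) < 1" by linarith+
    then show ?thesis
      by (cases "x < frac (- s)") (simp_all add: floor_eq_iff)
  qed
  ultimately show ?thesis by simp
qed

lemma frac_of_nat_mult_eq_iff:
  assumes "\<theta> \<notin> \<rat>"
  shows "frac (real a * \<theta>) = frac (real b * \<theta>) \<longleftrightarrow> a = b"
proof
  assume "frac (real a * \<theta>) = frac (real b * \<theta>)"
  then obtain z where "real a * \<theta> = real b * \<theta> + of_int z"
    by (rule frac_eqE)
  then have "(real a - real b) * \<theta> = of_int z"
    by (simp add: algebra_simps)
  show "a = b"
  proof (rule ccontr)
    assume "a \<noteq> b"
    with \<open>(real a - real b) * \<theta> = of_int z\<close> have "\<theta> = of_int z / (real a - real b)"
      by (simp add: field_simps)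
    with assms show False
      by simp
  qed
qed simp

lemma ex_index_between:
  fixes q :: "nat \<Rightarrow> 'a::linorder"
  assumes "q 0 \<le> x" "x < q n"
  shows "\<exists>j<n. q j \<le> x \<and> x < q (Suc j)"
  using assms(2)
proof (induction n)
  case (Suc n)
  then show ?case
    using assms(1) by (cases "x < q n") (auto intro: less_SucI)
qed (use assms(1) in simp)

lemma forward_differences_eq_iff:
  fixes f g :: "nat \<Rightarrow> 'a::ab_group_add"
  shows "(\<forall>l<n. f (Suc l) - f l = g (Suc l) - g l) \<longleftrightarrow> (\<forall>l\<le>n. f l - g l = f 0 - g 0)"
proof -
  have step: "f (Suc l) - g (Suc l) = (f (Suc l) - f l) - (g (Suc l) - g l) + (f l - g l)" for l
    by (simp add: algebra_simps)
  show ?thesis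
  proof
    assume steps: "\<forall>l<n. f (Suc l) - f l = g (Suc l) - g l"
    have "l \<le> n \<longrightarrow> f l - g l = f 0 - g 0" for l
    proof (induction l)
      case (Suc l)
      show ?case
      proof
        assume "Suc l \<le> n"
        then have "f (Suc l) - f l = g (Suc l) - g l" "f l - g l = f 0 - g 0"
          using steps Suc.IH by simp_all
        then show "f (Suc l) - g (Suc l) = f 0 - g 0"
          using step[of l] by simp
      qed
    qed simp
    then show "\<forall>l\<le>n. f l - g l = f 0 - g 0" by blast
  next
    assume "\<forall>l\<le>n. f l - g l = f 0 - g 0"
    then show "\<forall>l<n. f (Suc l) - f l = g (Suc l) - g l"
      using step by (metis Suc_leI less_imp_le add_right_cancel diff_add_cancel eq_iff_diff_eq_0)
  qed
qed

lemma ordered_enumerations_eq: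
  fixes f g :: "nat \<Rightarrow> 'a set" and k j :: nat
  assumes f: "bij_betw f {0..k} S" and g: "bij_betw g {0..k} S"
    and nonempty: "\<And>A. A \<in> S \<Longrightarrow> A \<noteq> {}"
    and asym: "\<And>u w. R u w \<Longrightarrow> \<not> R w u"
    and f_ord: "\<And>i j u w. i < j \<Longrightarrow> j \<le> k \<Longrightarrow> u \<in> f i \<Longrightarrow> w \<in> f j \<Longrightarrow> R u w"
    and g_ord: "\<And>i j u w. i < j \<Longrightarrow> j \<le> k \<Longrightarrow> u \<in> g i \<Longrightarrow> w \<in> g j \<Longrightarrow> R u w"
  shows "j \<le> k \<Longrightarrow> f j = g j"
proof (induction j rule: less_induct)
  case (less j)
  have inj: "inj_on f {0..k}" "inj_on g {0..k}" and img: "f ` {0..k} = S" "g ` {0..k} = S"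
    using f g by (auto simp: bij_betw_def)
  have "f j \<in> S" "g j \<in> S"
    using bij_betw_apply[OF f] bij_betw_apply[OF g] less.prems by auto
  then have "f j \<in> g ` {0..k}" "g j \<in> f ` {0..k}"
    unfolding img .
  then obtain t s where t: "t \<le> k" "f j = g t" and s: "s \<le> k" "g j = f s"
    by auto
  have "\<not> t < j"
  proof
    assume "t < j"
    then have "f t = f j"
      using less.IH t by simp
    then have "t = j"
      using inj_onD[OF inj(1)] t less.prems by simp
    with \<open>t < j\<close> show False
      by simp
  qed
  moreover have "\<not> s < j"
  proof
    assume "s < j"
    then have "g s = g j"
      using less.IH s by simp
    then have "s = j"
      using inj_onD[OF inj(2)] s less.prems by simp
    with \<open>s < j\<close> show False
      by simp
  qed
  moreover have False if "j < t" "j < s"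
  proof -
    have "f j \<in> S" "f s \<in> S"
      using bij_betw_apply[OF f] s less.prems by auto
    then obtain u w where u: "u \<in> f j" and w: "w \<in> f s"
      using nonempty by blast
    have "R u w"
      using f_ord[OF \<open>j < s\<close> \<open>s \<le> k\<close> u w] .
    moreover have "R w u"
      using g_ord[OF \<open>j < t\<close> \<open>t \<le> k\<close>, of w u] u w s t by simp
    ultimately show False
      using asym by blast
  qed
  ultimately have "t = j \<or> s = j"
    by (meson linorder_neqE_nat)
  then show ?case
    using s t by auto
qed

section \<open>Itineraries of the rotation\<close>

definition itinerary :: "real \<Rightarrow> nat \<Rightarrow> real \<Rightarrow> bool list" where
  "itinerary \<theta> m x = map (\<lambda>i. frac (x + real i * \<theta>) \<in> I_b \<theta>) [0..<m]"

lemma length_itinerary [simp]: "length (itinerary \<theta> m x) = m"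
  by (simp add: itinerary_def)

lemma factor_at_eq_itinerary: "factor_at \<theta> m n = itinerary \<theta> m (frac (real n * \<theta>))"
  by (simp add: factor_at_def itinerary_def sturm_def list_eq_iff_nth_eq distrib_right)

lemma frac_in_I_a_iff: "frac y \<in> I_a \<theta> \<longleftrightarrow> frac y \<notin> I_b \<theta>"
  using frac_lt_1[of y] by (auto simp: I_a_def I_b_def)

lemma itinerary_eq_iff:
  "itinerary \<theta> m x = u \<longleftrightarrow> length u = m \<and> (\<forall>i < m. (frac (x + real i * \<theta>) \<in> I_b \<theta>) = u ! i)"
  by (auto simp: itinerary_def list_eq_iff_nth_eq)

lemma J_eq_itinerary: "J \<theta> u = {x \<in> {0..<1}. itinerary \<theta> (length u) x = u}"
proof -
  have "Rot \<theta> i x \<in> I_letter \<theta> b \<longleftrightarrow> (frac (x + real i * \<theta>) \<in> I_b \<theta>) = b" for i x b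
    by (cases b) (simp_all add: Rot_def I_letter_def frac_in_I_a_iff)
  then show ?thesis
    by (simp add: J_def itinerary_eq_iff)
qed

lemma height_map_upt_eq_floor_diff:
  assumes "0 < \<theta>" "\<theta> < 1" "a \<le> b"
  shows "int (height (map (\<lambda>i. frac (x + real i * \<theta>) \<in> I_b \<theta>) [a..<b])) =
    \<lfloor>x + real b * \<theta>\<rfloor> - \<lfloor>x + real a * \<theta>\<rfloor>"
  using assms(3)
proof (induction b)
  case (Suc b)
  have "\<lfloor>x + real (Suc b) * \<theta>\<rfloor> = \<lfloor>x + real b * \<theta>\<rfloor> + of_bool (frac (x + real b * \<theta>) \<in> I_b \<theta>)"
    using floor_add_theta[OF assms(1,2), of "x + real b * \<theta>"] by (simp add: algebra_simps)
  with Suc show ?case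
    by (cases "a = Suc b") (auto simp: height_def)
qed (simp add: height_def)

lemma take_itinerary: "i \<le> m \<Longrightarrow> take i (itinerary \<theta> m x) = itinerary \<theta> i x"
  by (simp add: itinerary_def take_map)

lemma height_itinerary:
  assumes "0 < \<theta>" "\<theta> < 1" "0 \<le> x" "x < 1"
  shows "int (height (itinerary \<theta> m x)) = \<lfloor>x + real m * \<theta>\<rfloor>"
  using height_map_upt_eq_floor_diff[OF assms(1,2), of 0 m x] assms(3,4)
  by (simp add: itinerary_def floor_eq_iff)

lemma itinerary_lex_mono:
  assumes "0 < \<theta>" "\<theta> < 1" "0 \<le> x" "x < y" "y < 1"
  shows "itinerary \<theta> m x = itinerary \<theta> m y \<or> lex_less (itinerary \<theta> m x) (itinerary \<theta> m y)"
proof -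
  have "\<forall>a b. (a, b) \<in> {(a, b). a < b} \<or> a = b \<or> (b, a) \<in> {(a::bool, b). a < b}"
    by auto
  then have "lex_less (itinerary \<theta> m x) (itinerary \<theta> m y) \<or> itinerary \<theta> m x = itinerary \<theta> m y
      \<or> lex_less (itinerary \<theta> m y) (itinerary \<theta> m x)"
    unfolding lex_less_def by (rule lexord_linear)
  moreover have "\<not> lex_less (itinerary \<theta> m y) (itinerary \<theta> m x)"
  proof
    assume "lex_less (itinerary \<theta> m y) (itinerary \<theta> m x)"
    then obtain i where i: "i < m" "take i (itinerary \<theta> m y) = take i (itinerary \<theta> m x)"
      and letters: "\<not> itinerary \<theta> m y ! i" "itinerary \<theta> m x ! i"
      by (auto simp: lex_less_def lexord_take_index_conv)
    have "\<lfloor>y + real i * \<theta>\<rfloor> = \<lfloor>x + real i * \<theta>\<rfloor>"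
      using i height_itinerary[OF assms(1,2), of y i] height_itinerary[OF assms(1,2), of x i] assms
      by (simp add: take_itinerary)
    moreover have "\<lfloor>z + real (Suc i) * \<theta>\<rfloor> =
        \<lfloor>z + real i * \<theta>\<rfloor> + of_bool (itinerary \<theta> m z ! i)" for z
      using floor_add_theta[OF assms(1,2), of "z + real i * \<theta>"] i
      by (simp add: itinerary_def algebra_simps)
    moreover have "\<lfloor>x + real (Suc i) * \<theta>\<rfloor> \<le> \<lfloor>y + real (Suc i) * \<theta>\<rfloor>"
      using assms by (intro floor_mono) simp
    ultimately show False
      using letters by simp
  qed
  ultimately show ?thesis
    by blast
qed

lemma lex_less_asym:
  assumes "lex_less u w"
  shows "\<not> lex_less w u"
proof -
  have "asym {(x::bool, y). x < y}"
    by (rule asymI) auto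
  then show ?thesis
    using assms lexord_asymmetric unfolding lex_less_def by blast
qed

section \<open>Height profiles\<close>

lemma psum_0 [simp]: "psum P 0 = 0"
  by (simp add: psum_def)

lemma psum_Suc: "l < length P \<Longrightarrow> psum P (Suc l) = psum P l + P ! l"
  by (simp add: psum_def take_Suc_conv_app_nth)

lemma psum_length: "psum P (length P) = sum_list P"
  by (simp add: psum_def)

lemma psum_mono: "i \<le> j \<Longrightarrow> psum P i \<le> psum P j"
  by (auto simp: psum_def dest: le_Suc_ex simp: take_add)

lemma psum_strict_mono_on:
  assumes "\<forall>p \<in> set P. 0 < p"
  shows "strict_mono_on {..length P} (psum P)"
proof (rule strict_mono_onI)
  fix i j assume "i \<in> {..length P}" "j \<in> {..length P}" "i < j"
  then have "P ! i \<in> set P"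
    by simp
  with assms \<open>i < j\<close> \<open>j \<in> {..length P}\<close> have "psum P i < psum P (Suc i)"
    by (simp add: psum_Suc)
  also have "psum P (Suc i) \<le> psum P j"
    using \<open>i < j\<close> by (simp add: psum_mono)
  finally show "psum P i < psum P j" .
qed

lemma block_itinerary:
  assumes "l < length P"
  shows "block P (itinerary \<theta> (sum_list P) x) l =
    map (\<lambda>i. frac (x + real i * \<theta>) \<in> I_b \<theta>) [psum P l..<psum P (Suc l)]"
proof -
  have "psum P (Suc l) \<le> sum_list P"
    using psum_mono[of "Suc l" "length P" P] assms by (simp add: psum_length)
  then show ?thesis
    using assms by (simp add: block_def itinerary_def drop_map take_map psum_Suc take_upt)
qed

lemma height_block_itinerary:
  assumes "0 < \<theta>" "\<theta> < 1" "l < length P"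
  shows "int (height (block P (itinerary \<theta> (sum_list P) x) l)) =
    \<lfloor>x + real (psum P (Suc l)) * \<theta>\<rfloor> - \<lfloor>x + real (psum P l) * \<theta>\<rfloor>"
  unfolding block_itinerary[OF assms(3)] by (rule height_map_upt_eq_floor_diff[OF assms(1,2) psum_mono]) simp

lemma height_profile_itinerary_eq_iff:
  assumes "0 < \<theta>" "\<theta> < 1" "0 \<le> x" "x < 1" "0 \<le> y" "y < 1"
  shows "height_profile P (itinerary \<theta> (sum_list P) x) = height_profile P (itinerary \<theta> (sum_list P) y)
    \<longleftrightarrow> (\<forall>l \<le> length P. frac (- real (psum P l) * \<theta>) \<le> x \<longleftrightarrow> frac (- real (psum P l) * \<theta>) \<le> y)"
proof -
  define F where "F z l = \<lfloor>z + real (psum P l) * \<theta>\<rfloor>" for z l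
  have "\<lfloor>x\<rfloor> = 0" "\<lfloor>y\<rfloor> = 0"
    using assms by (simp_all add: floor_eq_iff)
  then have F0: "F x 0 = F y 0"
    by (simp add: F_def)
  have "height_profile P (itinerary \<theta> (sum_list P) x) = height_profile P (itinerary \<theta> (sum_list P) y)
    \<longleftrightarrow> (\<forall>l < length P. height (block P (itinerary \<theta> (sum_list P) x) l) =
                         height (block P (itinerary \<theta> (sum_list P) y) l))"
    by (auto simp: height_profile_def)
  also have "\<dots> \<longleftrightarrow> (\<forall>l < length P. F x (Suc l) - F x l = F y (Suc l) - F y l)"
    using height_block_itinerary[OF assms(1,2), of _ P x] height_block_itinerary[OF assms(1,2), of _ P y]
    unfolding F_def by (metis of_nat_eq_iff)
  also have "\<dots> \<longleftrightarrow> (\<forall>l \<le> length P. F x l = F y l)"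
    unfolding forward_differences_eq_iff using F0 by simp
  also have "\<dots> \<longleftrightarrow> (\<forall>l \<le> length P. frac (- real (psum P l) * \<theta>) \<le> x \<longleftrightarrow> frac (- real (psum P l) * \<theta>) \<le> y)"
  proof -
    have "F x l = F y l \<longleftrightarrow> (frac (- real (psum P l) * \<theta>) \<le> x \<longleftrightarrow> frac (- real (psum P l) * \<theta>) \<le> y)"
      for l using assms by (auto simp: F_def floor_add_unit_interval not_less[symmetric])
    then show ?thesis by simp
  qed
  finally show ?thesis .
qed

section \<open>Bounded remainder intervals\<close>

definition bounded_remainder :: "real \<Rightarrow> real \<Rightarrow> bool" where
  "bounded_remainder \<theta> q \<longleftrightarrow>
     (\<exists>C. \<forall>M. \<bar>real (card {n. n < M \<and> frac (real n * \<theta>) < q}) - real M * q\<bar> \<le> C)"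

lemma card_less_eq_sum_of_bool:
  "real (card {n. n < (M::nat) \<and> P n}) = (\<Sum>n<M. of_bool (P n))"
proof -
  have "{n. n < M \<and> P n} = {..<M} \<inter> {n. P n}"
    by auto
  then show ?thesis
    by simp
qed

lemma sum_shift_diff_bounded:
  fixes f :: "nat \<Rightarrow> real"
  assumes "\<And>n. 0 \<le> f n" "\<And>n. f n < 1"
  shows "\<bar>(\<Sum>n<M. f (n + t)) - (\<Sum>n<M. f n)\<bar> \<le> real t"
proof (induction t)
  case (Suc t)
  have "(\<Sum>n<M. f (n + Suc t)) - (\<Sum>n<M. f (n + t)) = f (M + t) - f t"
    using sum_lessThan_telescope[of "\<lambda>n. f (n + t)" M] by (simp add: sum_subtractf)
  with Suc assms[of "M + t"] assms[of t] show ?case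
    by simp
qed simp

lemma bounded_remainder_one_minus_frac: "bounded_remainder \<theta> (1 - frac (real t * \<theta>))"
proof -
  define c where "c = frac (real t * \<theta>)"
  have indicator: "of_bool (frac (real n * \<theta>) < 1 - c) =
      1 - c - frac (real n * \<theta>) + frac (real (n + t) * \<theta>)" for n
  proof -
    have "frac (real (n + t) * \<theta>) = frac (real n * \<theta> + real t * \<theta>)"
      by (simp add: algebra_simps)
    then show ?thesis
      by (simp add: frac_add c_def)
  qed
  have "real (card {n. n < M \<and> frac (real n * \<theta>) < 1 - c}) - real M * (1 - c) =
      (\<Sum>n<M. frac (real (n + t) * \<theta>)) - (\<Sum>n<M. frac (real n * \<theta>))" for M
    by (simp add: card_less_eq_sum_of_bool indicator sum.distrib sum_subtractf)
  moreover have "\<bar>(\<Sum>n<M. frac (real (n + t) * \<theta>)) - (\<Sum>n<M. frac (real n * \<theta>))\<bar> \<le> real t" for M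
    by (rule sum_shift_diff_bounded[of "\<lambda>n. frac (real n * \<theta>)"]) (simp_all add: frac_lt_1)
  ultimately show ?thesis
    unfolding bounded_remainder_def c_def by metis
qed

lemma bounded_remainder_frac_neg: "bounded_remainder \<theta> (frac (- (real t * \<theta>)))"
proof (cases "real t * \<theta> \<in> \<int>")
  case True
  then show ?thesis
    by (auto simp: bounded_remainder_def frac_neg not_less intro: exI[of _ 0])
next
  case False
  then show ?thesis
    using bounded_remainder_one_minus_frac by (simp add: frac_neg)
qed

lemma bounded_remainder_one: "bounded_remainder \<theta> 1"
  using bounded_remainder_one_minus_frac[of \<theta> 0] by simp

lemma LIMSEQ_div_of_nat_if_bounded_diff:
  fixes f :: "nat \<Rightarrow> real"
  assumes "\<And>N. \<bar>f N - real N * L\<bar> \<le> K"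
  shows "(\<lambda>N. f N / real N) \<longlonglongrightarrow> L"
proof -
  have "(\<lambda>N. (f N - real N * L) / real N) \<longlonglongrightarrow> 0"
  proof (rule tendsto_0_le)
    show "(\<lambda>N. 1 / real N) \<longlonglongrightarrow> 0"
      by (rule lim_const_over_n)
    show "\<forall>\<^sub>F N in sequentially. norm ((f N - real N * L) / real N) \<le> norm (1 / real N) * K"
      using assms by (simp add: abs_div divide_right_mono)
  qed
  then have "(\<lambda>N. L + (f N - real N * L) / real N) \<longlonglongrightarrow> L"
    using tendsto_add[OF tendsto_const] by fastforce
  moreover have "\<forall>\<^sub>F N in sequentially. L + (f N - real N * L) / real N = f N / real N"
    using eventually_gt_at_top[of 0] by eventually_elim (simp add: field_simps)
  ultimately show ?thesis
    by (rule Lim_transform_eventually)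
qed

lemma bounded_remainder_interval_frequency:
  assumes "a \<le> b" "bounded_remainder \<theta> a" "bounded_remainder \<theta> b"
  shows "(\<lambda>N. real (card {n. n + m \<le> N \<and> frac (real n * \<theta>) \<in> {a..<b}}) / real N) \<longlonglongrightarrow> b - a"
proof -
  define count where "count q M = real (card {n. n < M \<and> frac (real n * \<theta>) < q})" for q M
  obtain Ca Cb where Ca: "\<And>M. \<bar>count a M - real M * a\<bar> \<le> Ca" and Cb: "\<And>M. \<bar>count b M - real M * b\<bar> \<le> Cb"
    using assms(2,3) unfolding bounded_remainder_def count_def by blast
  have "\<bar>real (card {n. n + m \<le> N \<and> frac (real n * \<theta>) \<in> {a..<b}}) - real N * (b - a)\<bar>
      \<le> Ca + Cb + (real m + 1) * (b - a)" for N
  proof -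
    define M where "M = Suc N - m"
    have "{n. n + m \<le> N \<and> frac (real n * \<theta>) \<in> {a..<b}} = {n. n < M \<and> frac (real n * \<theta>) \<in> {a..<b}}"
      unfolding M_def by auto
    moreover have "real (card {n. n < M \<and> frac (real n * \<theta>) \<in> {a..<b}}) = count b M - count a M"
    proof -
      have "of_bool (z \<in> {a..<b}) = of_bool (z < b) - (of_bool (z < a) :: real)" for z
        using assms(1) by auto
      then show ?thesis
        by (simp add: count_def card_less_eq_sum_of_bool sum_subtractf)
    qed
    moreover have "\<bar>(real M - real N) * (b - a)\<bar> \<le> (real m + 1) * (b - a)"
    proof -
      have "\<bar>real M - real N\<bar> \<le> real m + 1"
        unfolding M_def by linarith
      then show ?thesis
        using assms(1) by (simp add: abs_mult mult_right_mono)
    qed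
    moreover have "count b M - count a M - real N * (b - a) =
        (count b M - real M * b) - (count a M - real M * a) + (real M - real N) * (b - a)"
      by (simp add: algebra_simps)
    ultimately show ?thesis
      using Ca[of M] Cb[of M] by (smt (verit))
  qed
  then show ?thesis
    by (rule LIMSEQ_div_of_nat_if_bounded_diff)
qed

section \<open>Cells and varieties\<close>

locale sturmian_partition =
  fixes \<theta> :: real and P :: "nat list"
  assumes irrational: "\<theta> \<notin> \<rat>" and theta_pos: "0 < \<theta>" and theta_less_1: "\<theta> < 1"
    and parts_pos: "\<forall>p \<in> set P. 0 < p"
begin

definition cut_points :: "real set" where
  "cut_points = {frac (- real (psum P l) * \<theta>) | l. l \<le> length P}"

lemma cut_points_image: "cut_points = (\<lambda>l. frac (- real (psum P l) * \<theta>)) ` {..length P}"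
  by (auto simp: cut_points_def)

lemma inj_on_cut_points: "inj_on (\<lambda>l. frac (- real (psum P l) * \<theta>)) {..length P}"
proof (rule inj_onI)
  fix i j assume "i \<in> {..length P}" "j \<in> {..length P}"
    and "frac (- real (psum P i) * \<theta>) = frac (- real (psum P j) * \<theta>)"
  then have "psum P i = psum P j"
    using frac_of_nat_mult_eq_iff[OF irrational] by (simp add: frac_neg_eq_iff)
  then show "i = j"
    using strict_mono_on_imp_inj_on[OF psum_strict_mono_on[OF parts_pos]] \<open>i \<in> _\<close> \<open>j \<in> _\<close>
    by (auto dest: inj_onD)
qed

abbreviation cut_list :: "real list" where
  "cut_list \<equiv> sorted_list_of_set cut_points"

lemma qpts_eq: "qpts \<theta> P j = (if j < length cut_list then cut_list ! j else 1)"
  by (simp add: qpts_def cut_points_def)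

lemma sorted_cut_list: "sorted_wrt (<) cut_list"
  by (rule strict_sorted_list_of_set)

lemma set_cut_list: "set cut_list = cut_points"
  by (simp add: cut_points_image)

lemma length_cut_list: "length cut_list = Suc (length P)"
  using card_image[OF inj_on_cut_points] by (simp add: cut_points_image)

lemma cut_points_unit_interval: "q \<in> cut_points \<Longrightarrow> 0 \<le> q \<and> q < 1"
  by (auto simp: cut_points_def frac_lt_1)

lemma qpts_strict_mono_on: "strict_mono_on {..Suc (length P)} (qpts \<theta> P)"
proof (rule strict_mono_onI)
  fix i j assume "i \<in> {..Suc (length P)}" "j \<in> {..Suc (length P)}" "i < j"
  then have i: "i < length cut_list"
    using length_cut_list by simp
  show "qpts \<theta> P i < qpts \<theta> P j"
  proof (cases "j < length cut_list")
    case True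
    then show ?thesis
      using i \<open>i < j\<close> sorted_wrt_nth_less[OF sorted_cut_list] by (simp add: qpts_eq)
  next
    case False
    have "cut_list ! i \<in> cut_points"
      using i set_cut_list nth_mem by blast
    then show ?thesis
      using i False cut_points_unit_interval by (simp add: qpts_eq)
  qed
qed

lemma qpts_image: "qpts \<theta> P ` {..length P} = cut_points"
proof -
  have "qpts \<theta> P ` {..length P} = (!) cut_list ` {0..<length cut_list}"
    using length_cut_list by (auto simp: qpts_eq)
  also have "\<dots> = cut_points"
    using nth_image[of "length cut_list" cut_list] set_cut_list by simp
  finally show ?thesis .
qed

lemma qpts_0: "qpts \<theta> P 0 = 0"
proof -
  have "0 \<in> cut_points"
    by (force simp: cut_points_def)
  then obtain l where "l \<le> length P" "qpts \<theta> P l = 0"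
    by (auto simp flip: qpts_image)
  moreover have "qpts \<theta> P 0 \<in> cut_points"
    by (auto simp flip: qpts_image)
  ultimately show ?thesis
    using strict_mono_on_leD[OF qpts_strict_mono_on, of 0 l] cut_points_unit_interval by force
qed

lemma qpts_last: "qpts \<theta> P (Suc (length P)) = 1"
  using length_cut_list by (simp add: qpts_eq)

lemma bounded_remainder_qpts: "bounded_remainder \<theta> (qpts \<theta> P j)"
proof (cases "j \<le> length P")
  case True
  then have "qpts \<theta> P j \<in> cut_points"
    by (auto simp flip: qpts_image)
  then show ?thesis
    using bounded_remainder_frac_neg by (auto simp: cut_points_def)
next
  case False
  then show ?thesis
    using bounded_remainder_one length_cut_list by (simp add: qpts_eq)
qed

definition cell :: "nat \<Rightarrow> real set" where
  "cell j = {qpts \<theta> P j..<qpts \<theta> P (Suc j)}"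

lemma cell_subset_unit_interval: "j \<le> length P \<Longrightarrow> cell j \<subseteq> {0..<1}"
  using strict_mono_on_leD[OF qpts_strict_mono_on, of 0 j]
    strict_mono_on_leD[OF qpts_strict_mono_on, of "Suc j" "Suc (length P)"]
  by (auto simp: cell_def qpts_0 qpts_last)

lemma ex_cell: "x \<in> {0..<1} \<Longrightarrow> \<exists>j \<le> length P. x \<in> cell j"
  using ex_index_between[of "qpts \<theta> P" x "Suc (length P)"]
  by (auto simp: cell_def qpts_0 qpts_last less_Suc_eq_le)

lemma qpts_le_iff_in_cell:
  assumes "x \<in> cell j" "j \<le> length P" "l \<le> length P"
  shows "qpts \<theta> P l \<le> x \<longleftrightarrow> l \<le> j"
proof
  assume "qpts \<theta> P l \<le> x"
  with assms have "qpts \<theta> P l < qpts \<theta> P (Suc j)"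
    by (simp add: cell_def)
  then show "l \<le> j"
    using strict_mono_on_leD[OF qpts_strict_mono_on, of "Suc j" l] assms by force
next
  assume "l \<le> j"
  then show "qpts \<theta> P l \<le> x"
    using strict_mono_on_leD[OF qpts_strict_mono_on, of l j] assms by (auto simp: cell_def)
qed

lemma height_profile_eq_iff_same_cell:
  assumes "x \<in> cell i" "y \<in> cell j" "i \<le> length P" "j \<le> length P"
  shows "height_profile P (itinerary \<theta> (sum_list P) x) = height_profile P (itinerary \<theta> (sum_list P) y)
    \<longleftrightarrow> i = j"
proof -
  have "x \<in> {0..<1}" "y \<in> {0..<1}"
    using assms cell_subset_unit_interval by blast+
  then have "height_profile P (itinerary \<theta> (sum_list P) x) = height_profile P (itinerary \<theta> (sum_list P) y)
      \<longleftrightarrow> (\<forall>q \<in> cut_points. q \<le> x \<longleftrightarrow> q \<le> y)"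
    using height_profile_itinerary_eq_iff[OF theta_pos theta_less_1] by (auto simp: cut_points_def)
  also have "\<dots> \<longleftrightarrow> (\<forall>l \<le> length P. qpts \<theta> P l \<le> x \<longleftrightarrow> qpts \<theta> P l \<le> y)"
    by (auto simp flip: qpts_image)
  also have "\<dots> \<longleftrightarrow> (\<forall>l \<le> length P. l \<le> i \<longleftrightarrow> l \<le> j)"
    using qpts_le_iff_in_cell assms by simp
  also have "\<dots> \<longleftrightarrow> i = j"
    using assms(3,4) by (metis le_antisym order_refl)
  finally show ?thesis .
qed

lemma cell_frequency:
  assumes "j \<le> length P"
  shows "(\<lambda>N. real (card {n. n + m \<le> N \<and> frac (real n * \<theta>) \<in> cell j}) / real N)
    \<longlonglongrightarrow> qpts \<theta> P (Suc j) - qpts \<theta> P j"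
  unfolding cell_def using assms
  by (intro bounded_remainder_interval_frequency bounded_remainder_qpts
      strict_mono_on_leD[OF qpts_strict_mono_on]) auto

lemma cell_visited:
  assumes "j \<le> length P"
  shows "\<exists>n. frac (real n * \<theta>) \<in> cell j"
proof (rule ccontr)
  assume "\<nexists>n. frac (real n * \<theta>) \<in> cell j"
  then have "(\<lambda>N. 0) \<longlonglongrightarrow> qpts \<theta> P (Suc j) - qpts \<theta> P j"
    using cell_frequency[OF assms, of 0] by simp
  then have "qpts \<theta> P (Suc j) = qpts \<theta> P j"
    using LIMSEQ_unique tendsto_const by fastforce
  moreover have "qpts \<theta> P j < qpts \<theta> P (Suc j)"
    using assms by (intro strict_mono_onD[OF qpts_strict_mono_on]) auto
  ultimately show False
    by simp
qed

lemma cells_disjoint: "x \<in> cell i \<Longrightarrow> x \<in> cell j \<Longrightarrow> i \<le> length P \<Longrightarrow> j \<le> length P \<Longrightarrow> i = j"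
  using height_profile_eq_iff_same_cell by blast

definition variety :: "nat \<Rightarrow> bool list set" where
  "variety j = {factor_at \<theta> (sum_list P) n | n. frac (real n * \<theta>) \<in> cell j}"

lemma factor_at_in_variety_iff:
  assumes "j \<le> length P"
  shows "factor_at \<theta> (sum_list P) n \<in> variety j \<longleftrightarrow> frac (real n * \<theta>) \<in> cell j"
proof
  assume "factor_at \<theta> (sum_list P) n \<in> variety j"
  then obtain n' where same: "factor_at \<theta> (sum_list P) n = factor_at \<theta> (sum_list P) n'"
    and n': "frac (real n' * \<theta>) \<in> cell j"
    by (auto simp: variety_def)
  obtain i where i: "i \<le> length P" and n: "frac (real n * \<theta>) \<in> cell i"
    using ex_cell[of "frac (real n * \<theta>)"] by (auto simp: frac_lt_1)
  have "i = j"
    using height_profile_eq_iff_same_cell[OF n n' i assms] same by (simp add: factor_at_eq_itinerary)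
  with n show "frac (real n * \<theta>) \<in> cell j"
    by simp
qed (auto simp: variety_def)

lemma variety_subset_Lang: "variety j \<subseteq> Lang \<theta> (sum_list P)"
  by (auto simp: variety_def Lang_def)

lemma variety_nonempty: "j \<le> length P \<Longrightarrow> variety j \<noteq> {}"
  using cell_visited by (auto simp: variety_def)

lemma variety_eq_class:
  assumes "j \<le> length P" "frac (real n * \<theta>) \<in> cell j"
  shows "{u \<in> Lang \<theta> (sum_list P). height_profile P u = height_profile P (factor_at \<theta> (sum_list P) n)}
    = variety j"
proof -
  have "height_profile P (factor_at \<theta> (sum_list P) n') = height_profile P (factor_at \<theta> (sum_list P) n)
      \<longleftrightarrow> factor_at \<theta> (sum_list P) n' \<in> variety j" for n'
  proof -
    obtain i where "i \<le> length P" "frac (real n' * \<theta>) \<in> cell i"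
      using ex_cell[of "frac (real n' * \<theta>)"] by (auto simp: frac_lt_1)
    then show ?thesis
      using height_profile_eq_iff_same_cell[of _ i _ j] assms factor_at_in_variety_iff[OF assms(1)]
        cells_disjoint
      by (metis factor_at_eq_itinerary)
  qed
  then show ?thesis
    using variety_subset_Lang by (auto simp: Lang_def)
qed

lemma varieties_eq: "varieties \<theta> (sum_list P) P = variety ` {0..length P}"
proof -
  have "varieties \<theta> (sum_list P) P =
      (\<lambda>n. {u \<in> Lang \<theta> (sum_list P). height_profile P u = height_profile P (factor_at \<theta> (sum_list P) n)}) ` UNIV"
    by (auto simp: varieties_def Lang_def)
  also have "\<dots> = variety ` {0..length P}"
  proof (intro equalityI subsetI)
    fix V assume "V \<in> (\<lambda>n. {u \<in> Lang \<theta> (sum_list P). height_profile P u = height_profile P (factor_at \<theta> (sum_list P) n)}) ` UNIV"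
    then obtain n where V: "V = {u \<in> Lang \<theta> (sum_list P). height_profile P u = height_profile P (factor_at \<theta> (sum_list P) n)}"
      by blast
    obtain j where "j \<le> length P" "frac (real n * \<theta>) \<in> cell j"
      using ex_cell[of "frac (real n * \<theta>)"] by (auto simp: frac_lt_1)
    then show "V \<in> variety ` {0..length P}"
      using V variety_eq_class by auto
  next
    fix V assume "V \<in> variety ` {0..length P}"
    then obtain j where "j \<le> length P" "V = variety j"
      by auto
    moreover obtain n where "frac (real n * \<theta>) \<in> cell j"
      using cell_visited[OF \<open>j \<le> length P\<close>] by blast
    ultimately show "V \<in> (\<lambda>n. {u \<in> Lang \<theta> (sum_list P). height_profile P u = height_profile P (factor_at \<theta> (sum_list P) n)}) ` UNIV"
      using variety_eq_class by blast
  qed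
  finally show ?thesis .
qed

lemma inj_on_variety: "inj_on variety {0..length P}"
proof (rule inj_onI)
  fix i j assume ij: "i \<in> {0..length P}" "j \<in> {0..length P}" "variety i = variety j"
  obtain n where "frac (real n * \<theta>) \<in> cell i"
    using cell_visited ij(1) by auto
  moreover from this have "frac (real n * \<theta>) \<in> cell j"
    using ij factor_at_in_variety_iff by (metis atLeastAtMost_iff)
  ultimately show "i = j"
    using cells_disjoint ij by auto
qed

lemma bij_betw_variety: "bij_betw variety {0..length P} (varieties \<theta> (sum_list P) P)"
  by (simp add: bij_betw_def inj_on_variety varieties_eq)

lemma variety_lex_ordered:
  assumes "i < j" "j \<le> length P" "u \<in> variety i" "w \<in> variety j"
  shows "lex_less u w"
proof -
  obtain n n' where u: "u = factor_at \<theta> (sum_list P) n" "frac (real n * \<theta>) \<in> cell i"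
    and w: "w = factor_at \<theta> (sum_list P) n'" "frac (real n' * \<theta>) \<in> cell j"
    using assms(3,4) by (auto simp: variety_def)
  have "qpts \<theta> P (Suc i) \<le> qpts \<theta> P j"
    using assms by (intro strict_mono_on_leD[OF qpts_strict_mono_on]) auto
  then have "frac (real n * \<theta>) < frac (real n' * \<theta>)"
    using u(2) w(2) by (simp add: cell_def)
  moreover have "u \<noteq> w"
    using assms u w height_profile_eq_iff_same_cell[OF u(2) w(2)] by (auto simp: factor_at_eq_itinerary)
  ultimately show ?thesis
    using itinerary_lex_mono[OF theta_pos theta_less_1 frac_ge_0 _ frac_lt_1] u w
    by (auto simp: factor_at_eq_itinerary)
qed

lemma variety_iff_J_subset_cell:
  assumes "u \<in> Lang \<theta> (sum_list P)" "j \<le> length P"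
  shows "u \<in> variety j \<longleftrightarrow> J \<theta> u \<subseteq> cell j"
proof -
  obtain n where u: "u = factor_at \<theta> (sum_list P) n"
    using assms(1) by (auto simp: Lang_def)
  have J: "J \<theta> u = {x \<in> {0..<1}. itinerary \<theta> (sum_list P) x = u}"
    using J_eq_itinerary u by (simp add: factor_at_def)
  show ?thesis
  proof
    assume "u \<in> variety j"
    show "J \<theta> u \<subseteq> cell j"
    proof
      fix x assume "x \<in> J \<theta> u"
      then have x: "x \<in> {0..<1}" "itinerary \<theta> (sum_list P) x = u"
        using J by auto
      obtain i where "i \<le> length P" "x \<in> cell i"
        using ex_cell[OF x(1)] by blast
      moreover have "frac (real n * \<theta>) \<in> cell j"
        using \<open>u \<in> variety j\<close> factor_at_in_variety_iff[OF assms(2)] u by simp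
      ultimately show "x \<in> cell j"
        using height_profile_eq_iff_same_cell[of x i _ j] assms(2) x(2) u
        by (metis factor_at_eq_itinerary)
    qed
  next
    assume "J \<theta> u \<subseteq> cell j"
    moreover have "frac (real n * \<theta>) \<in> J \<theta> u"
      using J u by (simp add: factor_at_eq_itinerary frac_lt_1)
    ultimately show "u \<in> variety j"
      using factor_at_in_variety_iff[OF assms(2)] u by auto
  qed
qed

end

theorem mainTheorem8:
  fixes \<theta> :: real and m k :: nat and P :: "nat list"
    and lam :: "nat \<Rightarrow> bool list set"
  assumes irr: "\<theta> \<notin> \<rat>" and th0: "0 < \<theta>" and th1: "\<theta> < 1"
    and k1: "1 \<le> k" and km: "k \<le> m"
    and lenP: "length P = k" and posP: "\<forall>p \<in> set P. 0 < p" and sumP: "sum_list P = m"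
    and lam_bij: "bij_betw lam {0..k} (varieties \<theta> m P)"
    and lam_ord: "\<forall>i j u w. i < j \<and> j \<le> k \<and> u \<in> lam i \<and> w \<in> lam j \<longrightarrow> lex_less u w"
  shows "\<forall>j \<le> k.
           (\<forall>u \<in> Lang \<theta> m. u \<in> lam j \<longleftrightarrow> J \<theta> u \<subseteq> {qpts \<theta> P j..<qpts \<theta> P (j + 1)})
         \<and> (\<forall>n. factor_at \<theta> m n \<in> lam j \<longleftrightarrow>
                 frac (real n * \<theta>) \<in> {qpts \<theta> P j..<qpts \<theta> P (j + 1)})
         \<and> ((\<lambda>N. real (occ_count \<theta> m (lam j) N) / real N)
              \<longlonglongrightarrow> qpts \<theta> P (j + 1) - qpts \<theta> P j)"
proof -
  interpret sturmian_partition \<theta> P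
    using irr th0 th1 posP by unfold_locales
  have lam_eq: "lam j = variety j" if "j \<le> k" for j
  proof (rule ordered_enumerations_eq[where R = lex_less, OF lam_bij _ _ lex_less_asym _ _ that])
    show "bij_betw variety {0..k} (varieties \<theta> m P)"
      using bij_betw_variety lenP sumP by simp
    show "A \<noteq> {}" if "A \<in> varieties \<theta> m P" for A
      using that variety_nonempty lenP sumP by (force simp: varieties_eq)
  qed (use lam_ord variety_lex_ordered lenP in blast)+
  have occ_count_eq: "occ_count \<theta> m (variety j) N = card {n. n + m \<le> N \<and> frac (real n * \<theta>) \<in> cell j}"
    if "j \<le> k" for j N
    using factor_at_in_variety_iff that lenP sumP by (simp add: occ_count_def)
  show ?thesis
    using lam_eq occ_count_eq variety_iff_J_subset_cell factor_at_in_variety_iff cell_frequency lenP sumP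
    by (simp add: cell_def)
qed

end
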